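(* Every 4-regular graph with girth at least six has a strong edge-coloring using at most 22 colors.
   Context: A strong edge-coloring of a graph is a proper edge-coloring in which, in addition, no two edges of the same color lie on a common path of length three. The girth of a graph is the length of its shortest cycle (a loop counts as a cycle of length 1 and a pair of parallel edges as a cycle of length 2). *)

theory Defs
  imports Main
begin

text \<open>A finite simple graph: vertex set V, edge set E of 2-element subsets of V.
  (Girth at least six excludes loops and parallel edges, so simple graphs suffice.)\<close>

definition simple_graph :: "'a set \<Rightarrow> 'a set set \<Rightarrow> bool" where
  "simple_graph V E \<longleftrightarrow> finite V \<and> (\<forall>e\<in>E. e \<subseteq> V \<and> card e = 2)"

definition degree :: "'a set set \<Rightarrow> 'a \<Rightarrow> nat" where
  "degree E v = card {e\<in>E. v \<in> e}"

definition regular :: "'a set \<Rightarrow> 'a set set \<Rightarrow> nat \<Rightarrow> bool" where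
  "regular V E d \<longleftrightarrow> (\<forall>v\<in>V. degree E v = d)"

definition is_cycle :: "'a set set \<Rightarrow> 'a list \<Rightarrow> bool" where
  "is_cycle E vs \<longleftrightarrow> length vs \<ge> 3 \<and> distinct vs \<and>
     (\<forall>i < length vs. {vs ! i, vs ! ((i + 1) mod length vs)} \<in> E)"

definition girth_at_least :: "'a set set \<Rightarrow> nat \<Rightarrow> bool" where
  "girth_at_least E g \<longleftrightarrow> (\<forall>vs. is_cycle E vs \<longrightarrow> length vs \<ge> g)"

definition strong_edge_coloring :: "'a set set \<Rightarrow> ('a set \<Rightarrow> nat) \<Rightarrow> nat \<Rightarrow> bool" where
  "strong_edge_coloring E c k \<longleftrightarrow>
     (\<forall>e\<in>E. c e < k) \<and>
     (\<forall>e\<in>E. \<forall>f\<in>E. e \<noteq> f \<and> e \<inter> f \<noteq> {} \<longrightarrow> c e \<noteq> c f) \<and>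
     (\<forall>u0 u1 u2 u3. distinct [u0, u1, u2, u3] \<and> {u0, u1} \<in> E \<and> {u1, u2} \<in> E \<and> {u2, u3} \<in> E
        \<longrightarrow> c {u0, u1} \<noteq> c {u1, u2} \<and> c {u1, u2} \<noteq> c {u2, u3} \<and> c {u0, u1} \<noteq> c {u2, u3})"

end

theory Submission
  imports Defs
begin

text \<open>
  A strong edge-colouring is a proper colouring of the conflict graph on the edges, in which
  two edges are adjacent when some edge meets both.  In a graph of maximum degree d an edge
  has at most 2d(d-1) conflicts, and we show that (2d-1)(d-1)+1 colours suffice for d-regular
  graphs of girth at least six; for d = 4 this is 22.

  In a connected component choose a root r and give one colour to an edge hanging off each of
  the d neighbours of r; girth six makes these edges pairwise non-conflicting.  Colour the
  remaining edges not at r greedily, farthest from r first: such an edge has a neighbour p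
  closer to r, and the d edges at p all conflict with it and, except for at most one
  precoloured edge, are still uncoloured, so at most 2d(d-1)-(d-1) colours are forbidden.
  Each edge at r conflicts with all d precoloured edges, which share a single colour, so
  again at most 2d(d-1)-(d-1) colours are forbidden.
\<close>

definition adj :: "'a set set \<Rightarrow> 'a \<Rightarrow> 'a \<Rightarrow> bool" where
  "adj E x y \<longleftrightarrow> {x, y} \<in> E"

definition star :: "'a set set \<Rightarrow> 'a \<Rightarrow> 'a set set" where
  "star E v = {e\<in>E. v \<in> e}"

definition neighbours :: "'a set set \<Rightarrow> 'a \<Rightarrow> 'a set" where
  "neighbours E v = {w. adj E v w}"

lemma adj_sym: "adj E x y \<Longrightarrow> adj E y x"
  by (simp add: adj_def insert_commute)

lemma adj_irrefl: "simple_graph V E \<Longrightarrow> \<not> adj E x x"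
  by (auto simp: simple_graph_def adj_def)

lemma adj_in_vertices: "simple_graph V E \<Longrightarrow> adj E x y \<Longrightarrow> x \<in> V \<and> y \<in> V"
  by (auto simp: simple_graph_def adj_def)

lemma finite_edges: "simple_graph V E \<Longrightarrow> finite E"
  unfolding simple_graph_def by (meson Pow_iff finite_Pow_iff finite_subset subsetI)

lemma finite_edge: "simple_graph V E \<Longrightarrow> e \<in> E \<Longrightarrow> finite e"
  unfolding simple_graph_def by (metis card.infinite zero_neq_numeral)

lemma edge_obtain_ends:
  assumes "simple_graph V E" "e \<in> E"
  obtains x y where "e = {x, y}" "x \<noteq> y" "adj E x y"
  using assms by (auto simp: simple_graph_def card_2_iff adj_def)

lemma edge_meeting_edge:
  assumes G: "simple_graph V E" and "e \<in> E" "h \<in> E" "h \<noteq> e" "w \<in> h \<inter> e"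
  obtains y where "h = {w, y}" "y \<notin> e" "adj E w y"
proof -
  obtain p q where h: "h = {p, q}" "adj E p q"
    using edge_obtain_ends[OF G \<open>h \<in> E\<close>] by metis
  define y where "y = (if w = p then q else p)"
  have hy: "h = {w, y}" "adj E w y"
    using h assms(5) adj_sym unfolding y_def by (auto simp: insert_commute)
  have "card h = card e" "finite e"
    using G \<open>e \<in> E\<close> \<open>h \<in> E\<close> by (auto simp: simple_graph_def card_ge_0_finite)
  have "y \<notin> e"
  proof
    assume "y \<in> e"
    then have "h \<subseteq> e" using hy(1) assms(5) by blast
    then show False
      using card_subset_eq[OF \<open>finite e\<close>] \<open>card h = card e\<close> assms(4) by blast
  qed
  with hy that show thesis by blast
qed

lemma degree_eq_card_star: "degree E v = card (star E v)"
  by (simp add: degree_def star_def)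

lemma star_eq_image_neighbours:
  assumes "simple_graph V E"
  shows "star E v = (\<lambda>w. {v, w}) ` neighbours E v"
proof
  show "star E v \<subseteq> (\<lambda>w. {v, w}) ` neighbours E v"
  proof
    fix e assume "e \<in> star E v"
    then have e: "e \<in> E" "v \<in> e" by (auto simp: star_def)
    then obtain x y where "e = {x, y}" "adj E x y"
      using edge_obtain_ends[OF assms] by metis
    then obtain w where "e = {v, w}" "adj E v w"
      using e(2) adj_sym[of E x y] by (cases "v = x") (auto simp: insert_commute)
    then show "e \<in> (\<lambda>w. {v, w}) ` neighbours E v"
      by (auto simp: neighbours_def)
  qed
qed (auto simp: star_def neighbours_def adj_def)

lemma card_neighbours:
  assumes "simple_graph V E"
  shows "card (neighbours E v) = degree E v"
proof -
  have "inj_on (\<lambda>w. {v, w}) (neighbours E v)"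
    by (auto simp: inj_on_def doubleton_eq_iff)
  then show ?thesis
    by (simp add: degree_eq_card_star star_eq_image_neighbours[OF assms] card_image)
qed

lemma neighbours_subset_vertices: "simple_graph V E \<Longrightarrow> neighbours E v \<subseteq> V"
  using adj_in_vertices[of V E v] by (auto simp: neighbours_def)

lemma finite_neighbours: "simple_graph V E \<Longrightarrow> finite (neighbours E v)"
  using neighbours_subset_vertices[of V E v] by (meson finite_subset simple_graph_def)

section \<open>Conflicting edges\<close>

definition conflicting :: "'a set set \<Rightarrow> 'a set \<Rightarrow> 'a set \<Rightarrow> bool" where
  "conflicting E e f \<longleftrightarrow> e \<noteq> f \<and> (\<exists>g\<in>E. g \<inter> e \<noteq> {} \<and> g \<inter> f \<noteq> {})"

definition conflicts :: "'a set set \<Rightarrow> 'a set \<Rightarrow> 'a set set" where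
  "conflicts E e = {f\<in>E. conflicting E e f}"

lemma not_conflicting_self [simp]: "\<not> conflicting E e e"
  by (simp add: conflicting_def)

lemma conflicting_sym: "conflicting E e f \<Longrightarrow> conflicting E f e"
  unfolding conflicting_def by blast

lemma conflicts_subset_stars:
  assumes G: "simple_graph V E" and "e \<in> E"
  shows "conflicts E e \<subseteq> (\<Union>w\<in>e. \<Union>x\<in>neighbours E w - e. star E x)"
proof
  have meets_e: "h \<in> (\<Union>w\<in>e. \<Union>x\<in>neighbours E w - e. star E x)"
    if h: "h \<in> E" "h \<noteq> e" "h \<inter> e \<noteq> {}" for h
  proof -
    obtain w where "w \<in> h \<inter> e" using h(3) by blast
    with edge_meeting_edge[OF G \<open>e \<in> E\<close> h(1,2)] obtain y where "h = {w, y}" "y \<notin> e" "adj E w y"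
      by metis
    then show ?thesis
      using \<open>w \<in> h \<inter> e\<close> \<open>h \<in> E\<close> by (auto simp: neighbours_def star_def)
  qed
  fix f assume "f \<in> conflicts E e"
  then obtain g where f: "f \<in> E" "f \<noteq> e" and g: "g \<in> E" "g \<inter> e \<noteq> {}" "g \<inter> f \<noteq> {}"
    by (auto simp: conflicts_def conflicting_def)
  show "f \<in> (\<Union>w\<in>e. \<Union>x\<in>neighbours E w - e. star E x)"
  proof (cases "g = e \<or> f \<inter> e \<noteq> {}")
    case True
    then show ?thesis using meets_e f g by blast
  next
    case False
    obtain w where "w \<in> g \<inter> e" using g(2) by blast
    with edge_meeting_edge[OF G \<open>e \<in> E\<close> g(1)] False obtain y where "g = {w, y}" "y \<notin> e" "adj E w y"
      by metis
    moreover have "y \<in> f"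
      using g(3) False \<open>w \<in> g \<inter> e\<close> \<open>g = {w, y}\<close> by blast
    ultimately show ?thesis
      using \<open>w \<in> g \<inter> e\<close> f(1) by (auto simp: neighbours_def star_def)
  qed
qed

lemma card_conflicts_le:
  assumes G: "simple_graph V E" and deg: "\<forall>v\<in>V. degree E v \<le> d" and "e \<in> E"
  shows "card (conflicts E e) \<le> 2 * (d - 1) * d"
proof -
  obtain u v where e: "e = {u, v}" "u \<noteq> v" "adj E u v"
    using edge_obtain_ends[OF G \<open>e \<in> E\<close>] by metis
  note fin = finite_neighbours[OF G]
  have star_le: "card (star E x) \<le> d" if "x \<in> neighbours E w" for x w
    using deg neighbours_subset_vertices[OF G] that by (auto simp: degree_eq_card_star)
  have outer_le: "card (neighbours E w - e) \<le> d - 1" if w: "w \<in> e" for w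
  proof -
    obtain w' where w': "w' \<in> e" "w' \<in> neighbours E w"
      using w e adj_sym[of E u v] by (auto simp: neighbours_def)
    have "w \<in> V" using w e(1,3) adj_in_vertices[OF G] by auto
    have "card (neighbours E w - e) \<le> card (neighbours E w - {w'})"
      using fin w'(1) by (intro card_mono) auto
    also have "\<dots> \<le> d - 1"
      using w'(2) fin deg \<open>w \<in> V\<close> by (simp add: card_neighbours[OF G] diff_le_mono)
    finally show ?thesis .
  qed
  have side_le: "card (\<Union>x\<in>neighbours E w - e. star E x) \<le> (d - 1) * d" if "w \<in> e" for w
  proof -
    have "card (\<Union>x\<in>neighbours E w - e. star E x) \<le> (\<Sum>x\<in>neighbours E w - e. card (star E x))"
      using fin by (intro card_UN_le) auto
    also have "\<dots> \<le> (\<Sum>x\<in>neighbours E w - e. d)"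
      using star_le by (intro sum_mono) auto
    also have "\<dots> = card (neighbours E w - e) * d"
      by simp
    also have "\<dots> \<le> (d - 1) * d"
      using outer_le[OF that] by (rule mult_le_mono1)
    finally show ?thesis .
  qed
  have "card (\<Union>w\<in>e. \<Union>x\<in>neighbours E w - e. star E x) \<le> (\<Sum>w\<in>e. card (\<Union>x\<in>neighbours E w - e. star E x))"
    using e(1) by (intro card_UN_le) auto
  also have "\<dots> \<le> (\<Sum>w\<in>e. (d - 1) * d)"
    using side_le by (intro sum_mono) auto
  also have "\<dots> = 2 * (d - 1) * d"
    using e(1,2) by simp
  finally have "card (\<Union>w\<in>e. \<Union>x\<in>neighbours E w - e. star E x) \<le> 2 * (d - 1) * d" .
  moreover have "finite (\<Union>w\<in>e. \<Union>x\<in>neighbours E w - e. star E x)"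
    by (rule finite_subset[OF _ finite_edges[OF G]]) (auto simp: star_def)
  ultimately show ?thesis
    using card_mono[OF _ conflicts_subset_stars[OF G \<open>e \<in> E\<close>]] by (meson order_trans)
qed

section \<open>Short walks in graphs of large girth\<close>

fun non_backtracking :: "'a list \<Rightarrow> bool" where
  "non_backtracking (x # y # z # zs) \<longleftrightarrow> x \<noteq> z \<and> non_backtracking (y # z # zs)"
| "non_backtracking _ \<longleftrightarrow> True"

lemma non_backtracking_Cons: "non_backtracking (x # xs) \<Longrightarrow> non_backtracking xs"
  by (cases xs rule: non_backtracking.cases) auto

lemma girth_at_least_mono: "E' \<subseteq> E \<Longrightarrow> girth_at_least E g \<Longrightarrow> girth_at_least E' g"
  unfolding girth_at_least_def is_cycle_def by blast

lemma is_cycle_if_closed_walk: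
  assumes "successively (adj E) (xs @ [hd xs])" "distinct xs" "3 \<le> length xs"
  shows "is_cycle E xs"
  unfolding is_cycle_def
proof (intro conjI allI impI)
  fix i assume i: "i < length xs"
  have "adj E ((xs @ [hd xs]) ! i) ((xs @ [hd xs]) ! Suc i)"
    using successively_nth[OF assms(1)] i by simp
  moreover have "hd xs = xs ! 0"
    using assms(3) by (cases xs) auto
  then have "(xs @ [hd xs]) ! Suc i = xs ! (Suc i mod length xs)"
    using i by (cases "Suc i = length xs") (auto simp: nth_append)
  ultimately show "{xs ! i, xs ! ((i + 1) mod length xs)} \<in> E"
    using i by (simp add: nth_append adj_def)
qed (use assms in auto)

text \<open>The first repeated vertex of a walk closes a cycle, of length at least three because
  the walk does not backtrack.\<close>

lemma distinct_if_walk_within_girth: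
  assumes G: "simple_graph V E" and girth: "girth_at_least E g"
  shows "successively (adj E) vs \<Longrightarrow> non_backtracking vs \<Longrightarrow> length vs \<le> g \<Longrightarrow> distinct vs"
proof (induction vs)
  case (Cons v ws)
  have "distinct ws"
    using Cons by (auto simp: successively_Cons dest: non_backtracking_Cons)
  moreover have "v \<notin> set ws"
  proof
    assume "v \<in> set ws"
    then obtain ys zs where ws: "ws = ys @ v # zs" "v \<notin> set ys"
      by (auto dest: split_list_first)
    have "successively (adj E) ((v # ys) @ (v # zs))"
      using Cons.prems(1) unfolding ws(1) by simp
    then have walk: "successively (adj E) ((v # ys) @ [v])"
      unfolding successively_append_iff by simp
    have "ys \<noteq> []"
      using walk adj_irrefl[OF G] by auto
    moreover have "\<not> (\<exists>y. ys = [y])"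
      using Cons.prems(2) unfolding ws(1) by auto
    ultimately have "3 \<le> length (v # ys)"
      by (cases ys) (auto simp: Suc_le_eq)
    moreover have "distinct (v # ys)"
      using \<open>distinct ws\<close> ws by simp
    ultimately have "is_cycle E (v # ys)"
      using walk by (intro is_cycle_if_closed_walk) auto
    then have "g \<le> length (v # ys)"
      using girth unfolding girth_at_least_def by blast
    then show False
      using Cons.prems(3) ws(1) by simp
  qed
  ultimately show ?case by simp
qed simp

lemma hanging_edges:
  assumes G: "simple_graph V E" and girth: "girth_at_least E 6"
    and "adj E r a" "adj E r b" "a \<noteq> b" "adj E a x" "x \<noteq> r" "adj E b y" "y \<noteq> r"
  shows "{a, x} \<inter> {b, y} = {}" and "\<not> conflicting E {a, x} {b, y}"
proof -
  have walk_distinct: "distinct vs"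
    if "successively (adj E) vs" "non_backtracking vs" "length vs \<le> 6" for vs
    using distinct_if_walk_within_girth[OF G girth] that by blast
  have adj: "adj E a r" "adj E x a" "adj E b r" "adj E y b"
    using assms(3-9) adj_sym by metis+
  have path: "distinct [x, a, r, b, y]"
    by (rule walk_distinct) (use assms adj in auto)
  then show disj: "{a, x} \<inter> {b, y} = {}" by auto
  have "\<not> adj E p q" if ends: "p \<in> {a, x}" "q \<in> {b, y}" for p q
  proof
    assume "adj E p q"
    then have qp: "adj E q p" by (rule adj_sym)
    consider "p = a" "q = b" | "p = a" "q = y" | "p = x" "q = b" | "p = x" "q = y"
      using ends by blast
    then show False
    proof cases
      case 1
      have "distinct [b, a, r, b]" by (rule walk_distinct) (use 1 qp assms adj path in auto)
      then show False by simp
    next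
      case 2
      have "distinct [y, a, r, b, y]" by (rule walk_distinct) (use 2 qp assms adj path in auto)
      then show False by simp
    next
      case 3
      have "distinct [b, x, a, r, b]" by (rule walk_distinct) (use 3 qp assms adj path in auto)
      then show False by simp
    next
      case 4
      have "distinct [y, x, a, r, b, y]" by (rule walk_distinct) (use 4 qp assms adj path in auto)
      then show False by simp
    qed
  qed
  moreover have "g = {p, q}" if "g \<in> E" "p \<in> g" "q \<in> g" "p \<noteq> q" for g p q
    using G that unfolding simple_graph_def by (metis card_2_iff insert_commute insertE singletonD)
  ultimately show "\<not> conflicting E {a, x} {b, y}"
    using disj unfolding conflicting_def adj_def by blast
qed

lemma exists_other_neighbour:
  assumes G: "simple_graph V E" and reg: "regular V E d" and "2 \<le> d" and "a \<in> V"
  obtains x where "adj E a x" "x \<noteq> r"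
proof -
  have "neighbours E a - {r} \<noteq> {}"
  proof
    assume "neighbours E a - {r} = {}"
    then have "card (neighbours E a) \<le> card {r}"
      by (intro card_mono) auto
    with reg \<open>a \<in> V\<close> \<open>2 \<le> d\<close> show False
      by (simp add: card_neighbours[OF G] regular_def)
  qed
  with that show thesis by (auto simp: neighbours_def)
qed

lemma hanging_edge_conflicts_star:
  assumes G: "simple_graph V E" and "adj E r a" "adj E a x" "x \<noteq> r" "e \<in> star E r"
  shows "{a, x} \<in> conflicts E e"
proof -
  have "a \<noteq> r" using assms(2) adj_irrefl[OF G] by blast
  with assms(4,5) have "{a, x} \<noteq> e" by (auto simp: star_def)
  moreover have "{r, a} \<in> E" "{a, x} \<in> E" using assms(2,3) by (simp_all add: adj_def)
  ultimately show ?thesis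
    using assms(5) unfolding conflicts_def conflicting_def star_def
    by (auto intro!: bexI[of _ "{r, a}"])
qed

lemma exists_hanging_matching:
  assumes G: "simple_graph V E" and reg: "regular V E d" and "2 \<le> d"
    and girth: "girth_at_least E 6" and "r \<in> V"
  obtains M where "M \<subseteq> E" "card M = d" "\<forall>e\<in>M. \<forall>f\<in>M. e \<inter> f \<noteq> {} \<longrightarrow> e = f"
    "\<forall>e\<in>M. \<forall>f\<in>M. \<not> conflicting E e f" "\<forall>e\<in>star E r. M \<subseteq> conflicts E e"
proof -
  have "\<forall>a\<in>neighbours E r. \<exists>x. adj E a x \<and> x \<noteq> r"
  proof
    fix a assume "a \<in> neighbours E r"
    then have "a \<in> V" using neighbours_subset_vertices[OF G] by blast
    then obtain x where "adj E a x" "x \<noteq> r"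
      by (rule exists_other_neighbour[OF G reg \<open>2 \<le> d\<close>])
    then show "\<exists>x. adj E a x \<and> x \<noteq> r" by blast
  qed
  then obtain hang where hang: "\<forall>a\<in>neighbours E r. adj E a (hang a) \<and> hang a \<noteq> r"
    by (rule bchoice[THEN exE])
  have hanging: "{a, hang a} \<inter> {b, hang b} = {} \<and> \<not> conflicting E {a, hang a} {b, hang b}"
    if ab: "a \<in> neighbours E r" "b \<in> neighbours E r" "a \<noteq> b" for a b
  proof -
    have "adj E r a" "adj E r b"
      using ab by (simp_all add: neighbours_def)
    moreover have "adj E a (hang a)" "hang a \<noteq> r" "adj E b (hang b)" "hang b \<noteq> r"
      using ab hang by simp_all
    ultimately show ?thesis
      using hanging_edges[OF G girth _ _ ab(3)] by simp
  qed
  define M where "M = (\<lambda>a. {a, hang a}) ` neighbours E r"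
  have "M \<subseteq> E"
    using hang unfolding M_def adj_def by auto
  have "inj_on (\<lambda>a. {a, hang a}) (neighbours E r)"
  proof (rule inj_onI)
    fix a b assume "a \<in> neighbours E r" "b \<in> neighbours E r" "{a, hang a} = {b, hang b}"
    then show "a = b" using hanging[of a b] by auto
  qed
  then have "card M = d"
    unfolding M_def using reg \<open>r \<in> V\<close>
    by (simp add: card_image card_neighbours[OF G] regular_def)
  have pair: "(e = f \<or> e \<inter> f = {}) \<and> \<not> conflicting E e f"
    if ef: "e \<in> M" "f \<in> M" for e f
  proof -
    obtain a b where "a \<in> neighbours E r" "b \<in> neighbours E r" "e = {a, hang a}" "f = {b, hang b}"
      using ef unfolding M_def by blast
    then show ?thesis
      using hanging[of a b] by (cases "a = b") auto
  qed
  have "\<forall>e\<in>star E r. M \<subseteq> conflicts E e"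
    unfolding M_def
  proof (intro ballI image_subsetI)
    fix e a assume "e \<in> star E r" "a \<in> neighbours E r"
    then show "{a, hang a} \<in> conflicts E e"
      using hang by (intro hanging_edge_conflicts_star[OF G]) (auto simp: neighbours_def)
  qed
  then show thesis
    using that[OF \<open>M \<subseteq> E\<close> \<open>card M = d\<close>] pair by blast
qed

definition strong_coloring_on :: "'a set set \<Rightarrow> 'a set set \<Rightarrow> nat \<Rightarrow> ('a set \<Rightarrow> nat) \<Rightarrow> bool" where
  "strong_coloring_on E D k c \<longleftrightarrow>
     D \<subseteq> E \<and> (\<forall>e\<in>D. c e < k) \<and> (\<forall>e\<in>D. \<forall>f\<in>D. conflicting E e f \<longrightarrow> c e \<noteq> c f)"

lemma strong_edge_coloring_if_strong_coloring_on:
  assumes "strong_coloring_on E E k c"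
  shows "strong_edge_coloring E c k"
  unfolding strong_edge_coloring_def
proof (intro conjI)
  show "\<forall>e\<in>E. c e < k"
    using assms by (simp add: strong_coloring_on_def)
  show "\<forall>e\<in>E. \<forall>f\<in>E. e \<noteq> f \<and> e \<inter> f \<noteq> {} \<longrightarrow> c e \<noteq> c f"
  proof (intro ballI impI)
    fix e f assume "e \<in> E" "f \<in> E" "e \<noteq> f \<and> e \<inter> f \<noteq> {}"
    then have "conflicting E e f"
      unfolding conflicting_def by (auto intro!: bexI[of _ e])
    with assms \<open>e \<in> E\<close> \<open>f \<in> E\<close> show "c e \<noteq> c f"
      unfolding strong_coloring_on_def by blast
  qed
  show "\<forall>u0 u1 u2 u3. distinct [u0, u1, u2, u3] \<and> {u0, u1} \<in> E \<and> {u1, u2} \<in> E \<and> {u2, u3} \<in> E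
      \<longrightarrow> c {u0, u1} \<noteq> c {u1, u2} \<and> c {u1, u2} \<noteq> c {u2, u3} \<and> c {u0, u1} \<noteq> c {u2, u3}"
  proof (intro allI impI)
    fix u0 u1 u2 u3
    assume path: "distinct [u0, u1, u2, u3] \<and> {u0, u1} \<in> E \<and> {u1, u2} \<in> E \<and> {u2, u3} \<in> E"
    then have "conflicting E {u0, u1} {u1, u2}" "conflicting E {u1, u2} {u2, u3}"
      "conflicting E {u0, u1} {u2, u3}"
      unfolding conflicting_def by (auto simp: doubleton_eq_iff intro!: bexI[of _ "{u1, u2}"])
    with assms path
    show "c {u0, u1} \<noteq> c {u1, u2} \<and> c {u1, u2} \<noteq> c {u2, u3} \<and> c {u0, u1} \<noteq> c {u2, u3}"
      unfolding strong_coloring_on_def by blast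
  qed
qed

lemma strong_coloring_on_insert:
  assumes c: "strong_coloring_on E D k c" and "e \<in> E"
    and free: "card (c ` (conflicts E e \<inter> D)) < k"
  shows "\<exists>c'. strong_coloring_on E (insert e D) k c' \<and> (\<forall>f\<in>D. c' f = c f)"
proof (cases "e \<in> D")
  case True
  then show ?thesis using c by (auto simp: insert_absorb)
next
  case False
  have "c ` (conflicts E e \<inter> D) \<subseteq> {..<k}"
    using c by (auto simp: strong_coloring_on_def)
  moreover have "\<not> {..<k} \<subseteq> c ` (conflicts E e \<inter> D)"
  proof
    assume "{..<k} \<subseteq> c ` (conflicts E e \<inter> D)"
    with calculation have "c ` (conflicts E e \<inter> D) = {..<k}" by blast
    with free show False by simp
  qed
  ultimately obtain col where col: "col < k" "col \<notin> c ` (conflicts E e \<inter> D)"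
    by blast
  have "strong_coloring_on E (insert e D) k (c(e := col))"
    using c col False \<open>e \<in> E\<close> unfolding strong_coloring_on_def conflicts_def
    by (auto dest: conflicting_sym)
  then show ?thesis using False by auto
qed

text \<open>The bound on the colours seen by the i-th edge may use the colours given on D, but
  not those chosen for earlier edges of the list.\<close>

lemma strong_coloring_on_extend_list:
  assumes "strong_coloring_on E D k c" and "set xs \<subseteq> E"
    and "\<And>i c'. i < length xs \<Longrightarrow> strong_coloring_on E (D \<union> set (take i xs)) k c' \<Longrightarrow>
           \<forall>f\<in>D. c' f = c f \<Longrightarrow> card (c' ` (conflicts E (xs ! i) \<inter> (D \<union> set (take i xs)))) < k"
  shows "\<exists>c'. strong_coloring_on E (D \<union> set xs) k c' \<and> (\<forall>f\<in>D. c' f = c f)"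
  using assms(2,3)
proof (induction xs rule: rev_induct)
  case Nil
  then show ?case using assms(1) by auto
next
  case (snoc x xs)
  have "card (c' ` (conflicts E (xs ! i) \<inter> (D \<union> set (take i xs)))) < k"
    if "i < length xs" "strong_coloring_on E (D \<union> set (take i xs)) k c'" "\<forall>f\<in>D. c' f = c f"
    for i c'
    using snoc.prems(2)[of i c'] that by (simp add: nth_append)
  with snoc.IH snoc.prems(1) obtain c1
    where c1: "strong_coloring_on E (D \<union> set xs) k c1" "\<forall>f\<in>D. c1 f = c f"
    by auto
  have "card (c1 ` (conflicts E x \<inter> (D \<union> set xs))) < k"
    using snoc.prems(2)[of "length xs" c1] c1 by simp
  moreover have "x \<in> E" using snoc.prems(1) by simp
  ultimately obtain c2
    where "strong_coloring_on E (insert x (D \<union> set xs)) k c2" "\<forall>f\<in>D \<union> set xs. c2 f = c1 f"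
    using strong_coloring_on_insert[OF c1(1)] by blast
  then show ?case using c1(2) by auto
qed

lemma card_image_add_le:
  assumes "finite X" "Y \<subseteq> X"
  shows "card (c ` X) + card Y \<le> card X + card (c ` Y)"
proof -
  have "c ` X = c ` (X - Y) \<union> c ` Y" using assms(2) by blast
  then have "card (c ` X) \<le> card (X - Y) + card (c ` Y)"
    by (metis card_Un_le card_image_le[OF finite_Diff[OF assms(1)]] add_le_mono1 order_trans)
  moreover have "card (X - Y) + card Y = card X"
    using assms by (metis card_Diff_subset finite_subset le_add_diff_inverse2 card_mono)
  ultimately show ?thesis by linarith
qed

lemma strong_coloring_on_extend_monochromatic:
  assumes c: "strong_coloring_on E D k c" and "finite E" "F \<subseteq> E" "Y \<subseteq> D" "c ` Y = {col}"
    and "\<And>e. e \<in> F \<Longrightarrow> Y \<subseteq> conflicts E e \<and> card (conflicts E e) + 1 < k + card Y"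
  shows "\<exists>c'. strong_coloring_on E (D \<union> F) k c'"
proof -
  obtain xs where xs: "set xs = F"
    using finite_list finite_subset[OF \<open>F \<subseteq> E\<close> \<open>finite E\<close>] by blast
  have "card (c' ` (conflicts E (xs ! i) \<inter> (D \<union> set (take i xs)))) < k"
    if "i < length xs" "\<forall>f\<in>D. c' f = c f" for i c'
  proof -
    let ?X = "conflicts E (xs ! i) \<inter> (D \<union> set (take i xs))"
    have "xs ! i \<in> F" using xs that(1) nth_mem by blast
    then have Y: "Y \<subseteq> ?X" "card (conflicts E (xs ! i)) + 1 < k + card Y"
      using assms(4,6) by auto
    have fin: "finite (conflicts E (xs ! i))"
      using \<open>finite E\<close> by (simp add: conflicts_def)
    have "c' ` Y = {col}" using assms(4,5) that(2) by (metis image_cong subsetD)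
    then have "card (c' ` ?X) + card Y \<le> card ?X + 1"
      using card_image_add_le[of ?X Y c'] fin Y(1) by simp
    moreover have "card ?X \<le> card (conflicts E (xs ! i))"
      using fin by (intro card_mono) auto
    ultimately show ?thesis using Y(2) by linarith
  qed
  then show ?thesis
    using strong_coloring_on_extend_list[OF c] xs \<open>F \<subseteq> E\<close> by blast
qed

lemma strong_coloring_on_Un:
  assumes c1: "strong_coloring_on E1 E1 k c1" and c2: "strong_coloring_on E2 E2 k c2"
    and disj: "\<Union>E1 \<inter> \<Union>E2 = {}"
  shows "strong_coloring_on (E1 \<union> E2) (E1 \<union> E2) k (\<lambda>e. if e \<in> E1 then c1 e else c2 e)"
proof -
  have within: "conflicting E' e f"
    if conf: "conflicting (E1 \<union> E2) e f" "E' = E1 \<or> E' = E2" "e \<in> E'" "f \<in> E'" for E' e f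
  proof -
    obtain g where g: "g \<in> E1 \<union> E2" "g \<inter> e \<noteq> {}" "g \<inter> f \<noteq> {}" "e \<noteq> f"
      using conf(1) unfolding conflicting_def by blast
    have "g \<in> E'"
      using g(1,2) conf(2,3) disj by blast
    with g show ?thesis unfolding conflicting_def by blast
  qed
  have across: "\<not> conflicting (E1 \<union> E2) e f" if "e \<in> E1" "f \<in> E2 - E1" for e f
  proof
    assume "conflicting (E1 \<union> E2) e f"
    then obtain g where g: "g \<in> E1 \<union> E2" "g \<inter> e \<noteq> {}" "g \<inter> f \<noteq> {}"
      unfolding conflicting_def by blast
    then show False
      using that disj by blast
  qed
  show ?thesis
    unfolding strong_coloring_on_def
  proof (intro conjI ballI impI)
    fix e f assume ef: "e \<in> E1 \<union> E2" "f \<in> E1 \<union> E2" "conflicting (E1 \<union> E2) e f"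
    consider "e \<in> E1" "f \<in> E1" | "e \<in> E2 - E1" "f \<in> E2 - E1"
      | "e \<in> E1" "f \<in> E2 - E1" | "e \<in> E2 - E1" "f \<in> E1"
      using ef(1,2) by blast
    then show "(if e \<in> E1 then c1 e else c2 e) \<noteq> (if f \<in> E1 then c1 f else c2 f)"
    proof cases
      case 1
      then show ?thesis using within[OF ef(3)] c1 unfolding strong_coloring_on_def by auto
    next
      case 2
      then show ?thesis using within[OF ef(3)] c2 unfolding strong_coloring_on_def by auto
    next
      case 3
      then show ?thesis using across ef(3) by blast
    next
      case 4
      then show ?thesis using across conflicting_sym ef(3) by blast
    qed
  qed (use c1 c2 in \<open>auto simp: strong_coloring_on_def\<close>)
qed

section \<open>Colouring towards a root\<close>

text \<open>The distance from r, meaningful only for vertices reachable from r.\<close>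

definition level :: "'a set set \<Rightarrow> 'a \<Rightarrow> 'a \<Rightarrow> nat" where
  "level E r v = (LEAST n. (adj E ^^ n) r v)"

definition edge_level :: "'a set set \<Rightarrow> 'a \<Rightarrow> 'a set \<Rightarrow> nat" where
  "edge_level E r e = Min (level E r ` e)"

lemma exists_neighbour_closer_to_root:
  assumes "(adj E)\<^sup>*\<^sup>* r v" "v \<noteq> r"
  obtains p where "adj E p v" "level E r p < level E r v"
proof -
  obtain n where "(adj E ^^ n) r v"
    using assms(1) rtranclp_power by metis
  then have walk: "(adj E ^^ level E r v) r v"
    unfolding level_def by (rule LeastI)
  then obtain m where m: "level E r v = Suc m"
    using assms(2) by (cases "level E r v") auto
  then obtain p where p: "(adj E ^^ m) r p" "adj E p v"
    using walk by (auto elim: relpowp_Suc_E)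
  from p(1) have "level E r p \<le> m"
    unfolding level_def by (rule Least_le)
  with p m that show thesis by simp
qed

lemma star_closer_to_root:
  assumes G: "simple_graph V E" and conn: "\<forall>v\<in>V. (adj E)\<^sup>*\<^sup>* r v" and "e \<in> E" "r \<notin> e"
  obtains p where "p \<in> V" "star E p \<subseteq> conflicts E e"
    "\<forall>f\<in>star E p. edge_level E r f < edge_level E r e"
proof -
  obtain u v where e: "e = {u, v}" "adj E u v"
    using edge_obtain_ends[OF G \<open>e \<in> E\<close>] by metis
  have "edge_level E r e \<in> level E r ` e"
    unfolding edge_level_def e(1) by (intro Min_in) auto
  then obtain x where x: "x \<in> e" "level E r x = edge_level E r e"
    by auto
  have "x \<in> V" using x(1) e adj_in_vertices[OF G] by auto
  then have "(adj E)\<^sup>*\<^sup>* r x" using conn by blast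
  moreover have "x \<noteq> r" using x(1) \<open>r \<notin> e\<close> by blast
  ultimately obtain p where p: "adj E p x" "level E r p < level E r x"
    by (rule exists_neighbour_closer_to_root)
  have closer: "edge_level E r f < edge_level E r e" if "f \<in> star E p" for f
  proof -
    have "f \<in> E" "p \<in> f"
      using that by (auto simp: star_def)
    then have "edge_level E r f \<le> level E r p"
      unfolding edge_level_def using finite_edge[OF G] by (intro Min_le) auto
    with p x show ?thesis by simp
  qed
  have "f \<in> conflicts E e" if "f \<in> star E p" for f
  proof -
    have "f \<noteq> e" using closer[OF that] by auto
    moreover have "{p, x} \<in> E" using p(1) by (simp add: adj_def)
    moreover have "f \<in> E" "p \<in> f" using that by (auto simp: star_def)
    ultimately show ?thesis
      using x(1) unfolding conflicts_def conflicting_def by (auto intro!: bexI[of _ "{p, x}"])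
  qed
  moreover have "p \<in> V" using p(1) adj_in_vertices[OF G] by blast
  ultimately show thesis using that closer by blast
qed

text \<open>An edge e not at the root conflicts with the d edges at a vertex closer to the root;
  at most one of them lies in the matching M, and none of them in a set X of edges whose
  levels are at least that of e.\<close>

lemma card_conflicts_Int_higher_le:
  assumes G: "simple_graph V E" and reg: "regular V E d" and conn: "\<forall>v\<in>V. (adj E)\<^sup>*\<^sup>* r v"
    and matching: "\<forall>e\<in>M. \<forall>f\<in>M. e \<inter> f \<noteq> {} \<longrightarrow> e = f"
    and "e \<in> E" "r \<notin> e" and higher: "\<forall>f\<in>X. edge_level E r e \<le> edge_level E r f"
  shows "card (conflicts E e \<inter> (M \<union> X)) + (d - 1) \<le> card (conflicts E e)"
proof -
  obtain p where p: "p \<in> V" "star E p \<subseteq> conflicts E e"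
    "\<forall>f\<in>star E p. edge_level E r f < edge_level E r e"
    using star_closer_to_root[OF G conn \<open>e \<in> E\<close> \<open>r \<notin> e\<close>] by blast
  have fin_star: "finite (star E p)" and fin_conflicts: "finite (conflicts E e)"
    using finite_edges[OF G] by (simp_all add: star_def conflicts_def)
  have "card (star E p \<inter> M) \<le> 1"
  proof -
    have "\<forall>f\<in>star E p \<inter> M. \<forall>g\<in>star E p \<inter> M. f = g"
      using matching unfolding star_def by blast
    then show ?thesis
      using fin_star by (simp add: card_le_Suc0_iff_eq)
  qed
  then have "d - 1 \<le> card (star E p - M)"
    using reg p(1) fin_star by (simp add: card_Diff_subset_Int regular_def degree_eq_card_star)
  moreover have "star E p \<inter> X = {}"
  proof (rule equals0I)
    fix f assume "f \<in> star E p \<inter> X"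
    then have "edge_level E r f < edge_level E r e" "edge_level E r e \<le> edge_level E r f"
      using p(3) higher by blast+
    then show False by linarith
  qed
  then have "card (conflicts E e \<inter> (M \<union> X)) \<le> card (conflicts E e - (star E p - M))"
    using fin_conflicts by (intro card_mono) auto
  moreover have "card (conflicts E e - (star E p - M)) = card (conflicts E e) - card (star E p - M)"
    using p(2) fin_star by (intro card_Diff_subset) auto
  moreover have "card (star E p - M) \<le> card (conflicts E e)"
    using p(2) fin_conflicts by (intro card_mono) auto
  ultimately show ?thesis by linarith
qed

lemma exists_list_sorted_descending:
  fixes f :: "'a \<Rightarrow> 'b::linorder"
  assumes "finite A"
  obtains xs where "set xs = A" "sorted_wrt (\<lambda>x y. f y \<le> f x) xs"
proof -
  obtain ys where ys: "set ys = A" using finite_list[OF assms] by blast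
  have "sorted_wrt (\<lambda>x y. f x \<le> f y) (sort_key f ys)"
    using sorted_sort_key[of f ys] unfolding sorted_wrt_map .
  then have "sorted_wrt (\<lambda>x y. f y \<le> f x) (rev (sort_key f ys))"
    unfolding sorted_wrt_rev .
  moreover have "set (rev (sort_key f ys)) = A"
    using ys by simp
  ultimately show thesis using that by blast
qed

lemma strong_coloring_on_extend_towards_root:
  assumes G: "simple_graph V E" and reg: "regular V E d" and conn: "\<forall>v\<in>V. (adj E)\<^sup>*\<^sup>* r v"
    and c: "strong_coloring_on E M k c" and matching: "\<forall>e\<in>M. \<forall>f\<in>M. e \<inter> f \<noteq> {} \<longrightarrow> e = f"
    and k: "2 * (d - 1) * d < k + (d - 1)"
  shows "\<exists>c'. strong_coloring_on E (M \<union> (E - star E r)) k c' \<and> (\<forall>f\<in>M. c' f = c f)"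
proof -
  have finE: "finite E" using finite_edges[OF G] .
  then obtain zs where zs: "set zs = E - star E r"
    "sorted_wrt (\<lambda>e f. edge_level E r f \<le> edge_level E r e) zs"
    using exists_list_sorted_descending[of "E - star E r"] by blast
  have bound: "card (c' ` (conflicts E (zs ! i) \<inter> (M \<union> set (take i zs)))) < k"
    if i: "i < length zs" for i and c' :: "'a set \<Rightarrow> nat"
  proof -
    have "zs ! i \<in> E - star E r"
      using zs(1) i by (metis nth_mem)
    moreover have "\<forall>f\<in>set (take i zs). edge_level E r (zs ! i) \<le> edge_level E r f"
      using sorted_wrt_nth_less[OF zs(2) _ i] by (auto simp: in_set_conv_nth)
    ultimately have "card (conflicts E (zs ! i) \<inter> (M \<union> set (take i zs))) + (d - 1)
        \<le> card (conflicts E (zs ! i))"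
      by (intro card_conflicts_Int_higher_le[OF G reg conn matching]) (auto simp: star_def)
    moreover have "card (conflicts E (zs ! i)) \<le> 2 * (d - 1) * d"
      using card_conflicts_le[OF G _ \<open>zs ! i \<in> E - star E r\<close>[THEN DiffD1]] reg
      by (simp add: regular_def)
    moreover have "card (c' ` (conflicts E (zs ! i) \<inter> (M \<union> set (take i zs))))
        \<le> card (conflicts E (zs ! i) \<inter> (M \<union> set (take i zs)))"
      using finE by (intro card_image_le) (simp add: conflicts_def)
    ultimately show ?thesis
      using k by linarith
  qed
  have "set zs \<subseteq> E" using zs(1) by blast
  then have "\<exists>c'. strong_coloring_on E (M \<union> set zs) k c' \<and> (\<forall>f\<in>M. c' f = c f)"
    by (rule strong_coloring_on_extend_list[OF c]) (erule bound)
  then show ?thesis using zs(1) by simp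
qed

lemma strong_coloring_on_connected:
  assumes G: "simple_graph V E" and reg: "regular V E d" and "2 \<le> d"
    and girth: "girth_at_least E 6" and "r \<in> V" and conn: "\<forall>v\<in>V. (adj E)\<^sup>*\<^sup>* r v"
  shows "\<exists>c. strong_coloring_on E E ((2 * d - 1) * (d - 1) + 1) c"
proof -
  define k where "k = (2 * d - 1) * (d - 1) + 1"
  have "2 * (d - 1) * d = (2 * d - 1) * (d - 1) + (d - 1)"
    using \<open>2 \<le> d\<close> by (cases d) (auto simp: algebra_simps)
  then have k: "2 * (d - 1) * d < k + (d - 1)"
    by (simp add: k_def)
  obtain M where M: "M \<subseteq> E" "card M = d" and matching: "\<forall>e\<in>M. \<forall>f\<in>M. e \<inter> f \<noteq> {} \<longrightarrow> e = f"
    and M_pairwise: "\<forall>e\<in>M. \<forall>f\<in>M. \<not> conflicting E e f"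
    and M_conflicts: "\<forall>e\<in>star E r. M \<subseteq> conflicts E e"
    using exists_hanging_matching[OF G reg \<open>2 \<le> d\<close> girth \<open>r \<in> V\<close>] by blast
  have "strong_coloring_on E M k (\<lambda>_. 0)"
    using M(1) M_pairwise by (auto simp: strong_coloring_on_def k_def)
  then obtain c where c: "strong_coloring_on E (M \<union> (E - star E r)) k c" "\<forall>e\<in>M. c e = 0"
    using strong_coloring_on_extend_towards_root[OF G reg conn _ matching k] by blast
  have "\<exists>c'. strong_coloring_on E (M \<union> (E - star E r) \<union> star E r) k c'"
  proof (rule strong_coloring_on_extend_monochromatic[OF c(1) finite_edges[OF G]])
    obtain m where "m \<in> M"
      using M(2) \<open>2 \<le> d\<close> by fastforce
    with c(2) show "c ` M = {0}"
      by force
    fix e assume "e \<in> star E r"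
    then have "card (conflicts E e) \<le> 2 * (d - 1) * d"
      using card_conflicts_le[OF G] reg by (simp add: regular_def star_def)
    then show "M \<subseteq> conflicts E e \<and> card (conflicts E e) + 1 < k + card M"
      using M_conflicts \<open>e \<in> star E r\<close> k M(2) \<open>2 \<le> d\<close> by auto
  qed (auto simp: star_def)
  moreover have "M \<union> (E - star E r) \<union> star E r = E"
    using M(1) by (auto simp: star_def)
  ultimately show ?thesis unfolding k_def by simp
qed

lemma simple_graph_restrict: "simple_graph V E \<Longrightarrow> simple_graph (V \<inter> C) {e\<in>E. e \<subseteq> C}"
  by (auto simp: simple_graph_def)

lemma regular_restrict:
  assumes "regular V E d" and "\<forall>e\<in>E. e \<subseteq> C \<or> e \<subseteq> - C"
  shows "regular (V \<inter> C) {e\<in>E. e \<subseteq> C} d"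
proof -
  have "{e\<in>{e\<in>E. e \<subseteq> C}. v \<in> e} = {e\<in>E. v \<in> e}" if "v \<in> C" for v
    using assms(2) that by blast
  then show ?thesis
    using assms(1) by (simp add: regular_def degree_def)
qed

lemma reachable_in_component:
  assumes "(adj E)\<^sup>*\<^sup>* r v"
  shows "(adj {e\<in>E. e \<subseteq> {w. (adj E)\<^sup>*\<^sup>* r w}})\<^sup>*\<^sup>* r v"
  using assms
proof (induction rule: rtranclp_induct)
  case (step y z)
  have "(adj E)\<^sup>*\<^sup>* r z"
    using step.hyps by (rule rtranclp.rtrancl_into_rtrancl)
  with step.hyps have "adj {e\<in>E. e \<subseteq> {w. (adj E)\<^sup>*\<^sup>* r w}} y z"
    by (auto simp: adj_def)
  with step.IH show ?case by (rule rtranclp.rtrancl_into_rtrancl)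
qed simp

lemma edge_inside_or_outside_component:
  assumes "simple_graph V E" "e \<in> E"
  shows "e \<subseteq> {v. (adj E)\<^sup>*\<^sup>* r v} \<or> e \<subseteq> - {v. (adj E)\<^sup>*\<^sup>* r v}"
proof -
  obtain x y where "e = {x, y}" "adj E x y" "adj E y x"
    using edge_obtain_ends[OF assms] adj_sym by metis
  then show ?thesis by (auto intro: rtranclp.rtrancl_into_rtrancl)
qed

theorem strong_coloring_on_regular_girth_6:
  assumes "simple_graph V E" "regular V E d" "2 \<le> d" "girth_at_least E 6"
  shows "\<exists>c. strong_coloring_on E E ((2 * d - 1) * (d - 1) + 1) c"
  using assms
proof (induction "card V" arbitrary: V E rule: less_induct)
  case less
  note G = less.prems(1) and reg = less.prems(2) and girth = less.prems(4)
  show ?case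
  proof (cases "V = {}")
    case True
    then have "E = {}"
      using G by (force simp: simple_graph_def)
    then show ?thesis by (intro exI) (simp add: strong_coloring_on_def)
  next
    case False
    then obtain r where "r \<in> V" by blast
    define C where "C = {v. (adj E)\<^sup>*\<^sup>* r v}"
    have split: "\<forall>e\<in>E. e \<subseteq> C \<or> e \<subseteq> - C"
      unfolding C_def using edge_inside_or_outside_component[OF G] by blast
    have "\<exists>c. strong_coloring_on {e\<in>E. e \<subseteq> C} {e\<in>E. e \<subseteq> C} ((2 * d - 1) * (d - 1) + 1) c"
    proof (rule strong_coloring_on_connected)
      show "\<forall>v\<in>V \<inter> C. (adj {e\<in>E. e \<subseteq> C})\<^sup>*\<^sup>* r v"
        unfolding C_def using reachable_in_component[of E r] by simp
    qed (use simple_graph_restrict[OF G] regular_restrict[OF reg split] less.prems(3)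
        girth_at_least_mono[OF _ girth] \<open>r \<in> V\<close> in \<open>auto simp: C_def\<close>)
    then obtain c1
      where c1: "strong_coloring_on {e\<in>E. e \<subseteq> C} {e\<in>E. e \<subseteq> C} ((2 * d - 1) * (d - 1) + 1) c1" ..
    have "\<exists>c. strong_coloring_on {e\<in>E. e \<subseteq> - C} {e\<in>E. e \<subseteq> - C} ((2 * d - 1) * (d - 1) + 1) c"
    proof (rule less.hyps)
      show "card (V \<inter> - C) < card V"
        using G \<open>r \<in> V\<close> by (intro psubset_card_mono) (auto simp: simple_graph_def C_def)
      show "regular (V \<inter> - C) {e\<in>E. e \<subseteq> - C} d"
        by (rule regular_restrict[OF reg]) (use split in auto)
    qed (use simple_graph_restrict[OF G] less.prems(3) girth_at_least_mono[OF _ girth] in auto)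
    then obtain c2
      where c2: "strong_coloring_on {e\<in>E. e \<subseteq> - C} {e\<in>E. e \<subseteq> - C} ((2 * d - 1) * (d - 1) + 1) c2" ..
    have "\<Union>{e\<in>E. e \<subseteq> C} \<inter> \<Union>{e\<in>E. e \<subseteq> - C} = {}"
      by auto
    moreover have "E = {e\<in>E. e \<subseteq> C} \<union> {e\<in>E. e \<subseteq> - C}"
      using split by auto
    ultimately show ?thesis
      using strong_coloring_on_Un[OF c1 c2] by auto
  qed
qed

theorem lemma2:
  fixes V :: "'a set" and E :: "'a set set"
  assumes "simple_graph V E"
    and "regular V E 4"
    and "girth_at_least E 6"
  shows "\<exists>c. strong_edge_coloring E c 22"
proof -
  obtain c where "strong_coloring_on E E ((2 * 4 - 1) * (4 - 1) + 1) c"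
    using strong_coloring_on_regular_girth_6[OF assms(1,2) _ assms(3)] by auto
  then show ?thesis
    using strong_edge_coloring_if_strong_coloring_on by auto
qed

end
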